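(* There exists a function $f:\mathbb{N}^3\to\mathbb{N}$ such that the following holds for all integers $D,k\ge 1$ and $b\ge 0$. Let $T$ be a rooted tree of maximum degree at most $D$ satisfying $b(T)\le b$. If every root-leaf path in $T$ contains less than $k$ vertices with at least two children, then $T$ has at most $f(D,b,k)$ leaves.
   Context: For a rooted tree $T$, $b(T)$ denotes the maximum depth of a rooted complete binary tree which appears in $T$ as a rooted minor, where the depth of a rooted tree is the maximum number of edges of a root-leaf path. *)

theory Defs
  imports Main
begin

text \<open>A finite rooted tree is given by a finite vertex set V, a root r in V and a
parent function p (p v is the parent of v for v in V other than r; p r is irrelevant).
Acyclicity/connectivity: iterating p from any vertex reaches the root.\<close>

definition rooted_tree :: "'a set \<Rightarrow> 'a \<Rightarrow> ('a \<Rightarrow> 'a) \<Rightarrow> bool" where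
  "rooted_tree V r p \<longleftrightarrow> finite V \<and> r \<in> V \<and> (\<forall>v\<in>V - {r}. p v \<in> V)
     \<and> (\<forall>v\<in>V. \<exists>n. (p ^^ n) v = r)"

definition children :: "'a set \<Rightarrow> 'a \<Rightarrow> ('a \<Rightarrow> 'a) \<Rightarrow> 'a \<Rightarrow> 'a set" where
  "children V r p v = {u \<in> V. u \<noteq> r \<and> p u = v}"

definition tdegree :: "'a set \<Rightarrow> 'a \<Rightarrow> ('a \<Rightarrow> 'a) \<Rightarrow> 'a \<Rightarrow> nat" where
  "tdegree V r p v = card (children V r p v) + (if v = r then 0 else 1)"

definition leaves :: "'a set \<Rightarrow> 'a \<Rightarrow> ('a \<Rightarrow> 'a) \<Rightarrow> 'a set" where
  "leaves V r p = {v \<in> V. children V r p v = {}}"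

definition root_path :: "'a \<Rightarrow> ('a \<Rightarrow> 'a) \<Rightarrow> 'a \<Rightarrow> 'a set" where
  "root_path r p v = {(p ^^ i) v | i. i \<le> (LEAST n. (p ^^ n) v = r)}"

definition tadj :: "'a set \<Rightarrow> 'a \<Rightarrow> ('a \<Rightarrow> 'a) \<Rightarrow> 'a \<Rightarrow> 'a \<Rightarrow> bool" where
  "tadj V r p u v \<longleftrightarrow> u \<in> V \<and> v \<in> V \<and> ((u \<noteq> r \<and> p u = v) \<or> (v \<noteq> r \<and> p v = u))"

definition tconnected :: "'a set \<Rightarrow> 'a \<Rightarrow> ('a \<Rightarrow> 'a) \<Rightarrow> 'a set \<Rightarrow> bool" where
  "tconnected V r p S \<longleftrightarrow>
     (\<forall>u\<in>S. \<forall>v\<in>S. (u, v) \<in> {(x, y). x \<in> S \<and> y \<in> S \<and> tadj V r p x y}\<^sup>*)"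

text \<open>The complete binary tree of depth d: vertices are boolean lists of length at most d,
root is [], the children of x are True#x and False#x.\<close>
definition cbt_rooted_minor :: "nat \<Rightarrow> 'a set \<Rightarrow> 'a \<Rightarrow> ('a \<Rightarrow> 'a) \<Rightarrow> bool" where
  "cbt_rooted_minor d V r p \<longleftrightarrow>
    (\<exists>\<beta> :: bool list \<Rightarrow> 'a set.
       (\<forall>x. length x \<le> d \<longrightarrow> \<beta> x \<noteq> {} \<and> \<beta> x \<subseteq> V \<and> tconnected V r p (\<beta> x))
     \<and> (\<forall>x y. length x \<le> d \<longrightarrow> length y \<le> d \<longrightarrow> x \<noteq> y \<longrightarrow> \<beta> x \<inter> \<beta> y = {})
     \<and> r \<in> \<beta> []
     \<and> (\<forall>x c. length (c # x) \<le> d \<longrightarrow>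
           (\<exists>u\<in>\<beta> (c # x). \<exists>v\<in>\<beta> x. tadj V r p u v)))"

definition bT :: "'a set \<Rightarrow> 'a \<Rightarrow> ('a \<Rightarrow> 'a) \<Rightarrow> nat" where
  "bT V r p = (GREATEST d. cbt_rooted_minor d V r p)"

end

theory Submission
  imports Defs "HOL-Library.Sublist"
begin

(*
  Encode a leaf by the choices made along its root path: at every vertex with at least two
  children, record the rank of the next vertex among these children. Two distinct leaves agree
  up to a deepest common ancestor, where the paths continue to different children; that ancestor
  is therefore branching, so the two codes share a prefix and then differ. Hence the encoding is
  injective, and since a code is a word over {0..D-1} of length less than k, there are at most
  sum_{i<k} D^i leaves.
*)

definition depth :: "'a \<Rightarrow> ('a \<Rightarrow> 'a) \<Rightarrow> 'a \<Rightarrow> nat" where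
  "depth r p v = (LEAST n. (p ^^ n) v = r)"

(* The vertex at depth i on the path from the root to v; for i > depth r p v it is v itself. *)
definition ancestor :: "'a \<Rightarrow> ('a \<Rightarrow> 'a) \<Rightarrow> 'a \<Rightarrow> nat \<Rightarrow> 'a" where
  "ancestor r p v i = (p ^^ (depth r p v - i)) v"

lemma funpow_ne_root: "i < depth r p v \<Longrightarrow> (p ^^ i) v \<noteq> r"
  unfolding depth_def by (rule not_less_Least)

lemma ancestor_depth: "ancestor r p v (depth r p v) = v"
  unfolding ancestor_def by simp

lemma funpow_ancestor:
  assumes "j \<le> i" "i \<le> depth r p v"
  shows "(p ^^ (i - j)) (ancestor r p v i) = ancestor r p v j"
proof -
  have "depth r p v - j = (i - j) + (depth r p v - i)" using assms by simp
  then show ?thesis unfolding ancestor_def by (simp add: funpow_add)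
qed

lemma root_path_eq_ancestors: "root_path r p v = ancestor r p v ` {..depth r p v}"
proof -
  let ?d = "depth r p v"
  have reflect: "(\<lambda>i. ?d - i) ` {..?d} = {..?d}"
  proof (intro equalityI subsetI)
    fix x assume "x \<in> {..?d}"
    then show "x \<in> (\<lambda>i. ?d - i) ` {..?d}"
      by (intro image_eqI[of _ _ "?d - x"]) auto
  qed auto
  have "ancestor r p v = (\<lambda>i. (p ^^ i) v) \<circ> (\<lambda>i. ?d - i)"
    unfolding ancestor_def by auto
  then have "ancestor r p v ` {..?d} = (\<lambda>i. (p ^^ i) v) ` {..?d}"
    by (simp only: image_comp[symmetric] reflect)
  then show ?thesis
    unfolding root_path_def depth_def[symmetric] by auto
qed

context
  fixes V :: "'a set" and r :: 'a and p :: "'a \<Rightarrow> 'a"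
  assumes tree: "rooted_tree V r p"
begin

lemma funpow_depth_eq_root: "v \<in> V \<Longrightarrow> (p ^^ depth r p v) v = r"
  using tree unfolding rooted_tree_def depth_def by (metis (mono_tags) LeastI_ex)

lemma funpow_in_V: "v \<in> V \<Longrightarrow> i \<le> depth r p v \<Longrightarrow> (p ^^ i) v \<in> V"
proof (induction i)
  case (Suc i)
  then have "(p ^^ i) v \<in> V - {r}" using funpow_ne_root[of i r p v] by simp
  then show ?case using tree unfolding rooted_tree_def by simp
qed simp

lemma depth_funpow:
  assumes "v \<in> V" "i \<le> depth r p v"
  shows "depth r p ((p ^^ i) v) = depth r p v - i"
  unfolding depth_def[of r p "(p ^^ i) v"]
proof (rule Least_equality)
  have "(p ^^ (depth r p v - i)) ((p ^^ i) v) = (p ^^ (depth r p v - i + i)) v"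
    by (simp add: funpow_add)
  then show "(p ^^ (depth r p v - i)) ((p ^^ i) v) = r"
    using assms funpow_depth_eq_root by simp
next
  fix n assume "(p ^^ n) ((p ^^ i) v) = r"
  then have "(p ^^ (n + i)) v = r" by (simp add: funpow_add)
  then have "\<not> n + i < depth r p v" using funpow_ne_root[of "n + i" r p v] by blast
  then show "depth r p v - i \<le> n" by simp
qed

lemma ancestor_in_V: "v \<in> V \<Longrightarrow> ancestor r p v i \<in> V"
  unfolding ancestor_def by (simp add: funpow_in_V)

lemma depth_ancestor: "v \<in> V \<Longrightarrow> i \<le> depth r p v \<Longrightarrow> depth r p (ancestor r p v i) = i"
  unfolding ancestor_def by (simp add: depth_funpow)

lemma inj_on_ancestor: "v \<in> V \<Longrightarrow> inj_on (ancestor r p v) {..depth r p v}"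
  by (rule inj_on_inverseI[where g = "depth r p"]) (simp add: depth_ancestor)

lemma finite_children: "finite (children V r p v)"
  using tree unfolding rooted_tree_def children_def by simp

lemma ancestor_0: "v \<in> V \<Longrightarrow> ancestor r p v 0 = r"
  unfolding ancestor_def by (simp add: funpow_depth_eq_root)

lemma ancestor_Suc_in_children:
  assumes "v \<in> V" "i < depth r p v"
  shows "ancestor r p v (Suc i) \<in> children V r p (ancestor r p v i)"
proof -
  have "depth r p (ancestor r p v (Suc i)) = Suc i"
    using assms by (simp add: depth_ancestor)
  then have "ancestor r p v (Suc i) \<noteq> r"
    unfolding depth_def by auto
  moreover have "p (ancestor r p v (Suc i)) = ancestor r p v i"
    using funpow_ancestor[of i "Suc i" r p v] assms by simp
  ultimately show ?thesis
    unfolding children_def using assms(1) by (simp add: ancestor_in_V)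
qed

lemma leaf_eq_of_ancestor:
  assumes "l \<in> leaves V r p" "v \<in> V" "j \<le> depth r p v" "ancestor r p v j = l"
  shows "v = l"
proof -
  have "\<not> j < depth r p v"
  proof
    assume "j < depth r p v"
    then have "ancestor r p v (Suc j) \<in> children V r p l"
      using ancestor_Suc_in_children assms(2,4) by blast
    then show False using assms(1) unfolding leaves_def by auto
  qed
  then show ?thesis
    using assms(3,4) ancestor_depth[of r p v] by simp
qed

lemma leaves_diverge:
  assumes l: "l \<in> leaves V r p" and l': "l' \<in> leaves V r p" and "l \<noteq> l'"
  obtains j where "j < depth r p l" "j < depth r p l'"
    "\<forall>i\<le>j. ancestor r p l i = ancestor r p l' i"
    "ancestor r p l (Suc j) \<noteq> ancestor r p l' (Suc j)"
proof -
  have V: "l \<in> V" "l' \<in> V" using l l' unfolding leaves_def by auto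
  define J where "J = {j. j \<le> min (depth r p l) (depth r p l') \<and> ancestor r p l j = ancestor r p l' j}"
  define j where "j = Max J"
  have "finite J" unfolding J_def by simp
  moreover have "0 \<in> J" unfolding J_def using V by (simp add: ancestor_0)
  ultimately have "j \<in> J" and j_max: "\<And>i. i \<in> J \<Longrightarrow> i \<le> j"
    unfolding j_def by (auto intro: Max_in Max_ge)
  then have j_le: "j \<le> depth r p l" "j \<le> depth r p l'"
    and j_eq: "ancestor r p l j = ancestor r p l' j" unfolding J_def by auto
  have "j \<noteq> depth r p l"
    using leaf_eq_of_ancestor[OF l V(2) j_le(2)] j_eq ancestor_depth[of r p l] \<open>l \<noteq> l'\<close>
    by force
  moreover have "j \<noteq> depth r p l'"
    using leaf_eq_of_ancestor[OF l' V(1) j_le(1)] j_eq ancestor_depth[of r p l'] \<open>l \<noteq> l'\<close>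
    by force
  ultimately have j_less: "j < depth r p l" "j < depth r p l'" using j_le by auto
  have "\<forall>i\<le>j. ancestor r p l i = ancestor r p l' i"
    using funpow_ancestor[of _ j r p l] funpow_ancestor[of _ j r p l'] j_le j_eq by metis
  moreover have "ancestor r p l (Suc j) \<noteq> ancestor r p l' (Suc j)"
    using j_max[of "Suc j"] j_less unfolding J_def by auto
  ultimately show ?thesis using that j_less by blast
qed

end

definition rank :: "'a::linorder set \<Rightarrow> 'a \<Rightarrow> nat" where
  "rank S x = card {y \<in> S. y < x}"

lemma rank_less_card:
  assumes "finite S" "x \<in> S"
  shows "rank S x < card S"
  unfolding rank_def using assms by (intro psubset_card_mono) auto

lemma strict_mono_on_rank:
  assumes "finite S"
  shows "strict_mono_on S (rank S)"
proof (rule strict_mono_onI)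
  fix x y assume "x \<in> S" "x < y"
  then have "{z \<in> S. z < x} \<subset> {z \<in> S. z < y}" by auto
  then show "rank S x < rank S y"
    unfolding rank_def using assms by (intro psubset_card_mono) auto
qed

lemma inj_on_rank: "finite S \<Longrightarrow> inj_on (rank S) S"
  by (rule strict_mono_on_imp_inj_on[OF strict_mono_on_rank])

primrec path_code :: "'a::linorder set \<Rightarrow> 'a \<Rightarrow> ('a \<Rightarrow> 'a) \<Rightarrow> 'a \<Rightarrow> nat \<Rightarrow> nat list" where
  "path_code V r p v 0 = []"
| "path_code V r p v (Suc i) = path_code V r p v i @
     (if 2 \<le> card (children V r p (ancestor r p v i))
      then [rank (children V r p (ancestor r p v i)) (ancestor r p v (Suc i))] else [])"

definition leaf_code :: "'a::linorder set \<Rightarrow> 'a \<Rightarrow> ('a \<Rightarrow> 'a) \<Rightarrow> 'a \<Rightarrow> nat list" where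
  "leaf_code V r p v = path_code V r p v (depth r p v)"

lemma path_code_cong:
  "\<forall>i\<le>n. ancestor r p v i = ancestor r p w i \<Longrightarrow> path_code V r p v n = path_code V r p w n"
  by (induction n) auto

lemma prefix_path_code: "i \<le> n \<Longrightarrow> prefix (path_code V r p v i) (path_code V r p v n)"
  by (induction n) (auto simp: le_Suc_eq)

lemma length_path_code:
  "length (path_code V r p v n) = card {i \<in> {..<n}. 2 \<le> card (children V r p (ancestor r p v i))}"
proof (induction n)
  case (Suc n)
  let ?B = "\<lambda>i. 2 \<le> card (children V r p (ancestor r p v i))"
  have "{i \<in> {..<Suc n}. ?B i} = (if ?B n then insert n {i \<in> {..<n}. ?B i} else {i \<in> {..<n}. ?B i})"
    by (auto simp: less_Suc_eq)
  then show ?case using Suc by simp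
qed simp

context
  fixes V :: "'a::linorder set" and r :: 'a and p :: "'a \<Rightarrow> 'a"
  assumes tree: "rooted_tree V r p"
begin

lemma length_leaf_code_le:
  assumes "v \<in> V"
  shows "length (leaf_code V r p v) \<le> card {w \<in> root_path r p v. card (children V r p w) \<ge> 2}"
proof -
  let ?B = "\<lambda>w. 2 \<le> card (children V r p w)"
  let ?I = "{i \<in> {..<depth r p v}. ?B (ancestor r p v i)}"
  have "inj_on (ancestor r p v) ?I"
    using inj_on_ancestor[OF tree assms] by (rule inj_on_subset) auto
  then have "length (leaf_code V r p v) = card (ancestor r p v ` ?I)"
    by (simp add: leaf_code_def length_path_code card_image)
  also have "\<dots> \<le> card {w \<in> root_path r p v. ?B w}"
    by (rule card_mono) (auto simp: root_path_eq_ancestors)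
  finally show ?thesis .
qed

lemma set_path_code:
  assumes "\<forall>u\<in>V. card (children V r p u) \<le> D" "v \<in> V" "n \<le> depth r p v"
  shows "set (path_code V r p v n) \<subseteq> {..<D}"
  using assms(3)
proof (induction n)
  case (Suc n)
  have "ancestor r p v (Suc n) \<in> children V r p (ancestor r p v n)"
    using ancestor_Suc_in_children[OF tree assms(2)] Suc.prems by simp
  then have "rank (children V r p (ancestor r p v n)) (ancestor r p v (Suc n)) < D"
    using rank_less_card[OF finite_children[OF tree]] assms(1) ancestor_in_V[OF tree assms(2)]
    by (meson order_less_le_trans)
  then show ?case using Suc by auto
qed simp

lemma inj_on_leaf_code: "inj_on (leaf_code V r p) (leaves V r p)"
proof (rule inj_onI, rule ccontr)
  fix l l' assume l: "l \<in> leaves V r p" and l': "l' \<in> leaves V r p"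
    and code_eq: "leaf_code V r p l = leaf_code V r p l'" and "l \<noteq> l'"
  obtain j where j: "j < depth r p l" "j < depth r p l'"
    and below: "\<forall>i\<le>j. ancestor r p l i = ancestor r p l' i"
    and apart: "ancestor r p l (Suc j) \<noteq> ancestor r p l' (Suc j)"
    by (rule leaves_diverge[OF tree l l' \<open>l \<noteq> l'\<close>])
  have V: "l \<in> V" "l' \<in> V" using l l' unfolding leaves_def by auto
  define C where "C = children V r p (ancestor r p l j)"
  have "ancestor r p l j = ancestor r p l' j" using below by simp
  then have in_C: "ancestor r p l (Suc j) \<in> C" "ancestor r p l' (Suc j) \<in> C"
    unfolding C_def using ancestor_Suc_in_children[OF tree] V j by metis+
  then have "card {ancestor r p l (Suc j), ancestor r p l' (Suc j)} \<le> card C"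
    by (intro card_mono) (auto simp: C_def finite_children[OF tree])
  then have "2 \<le> card C" using apart by simp
  then have "path_code V r p l (Suc j) = path_code V r p l j @ [rank C (ancestor r p l (Suc j))]"
    and "path_code V r p l' (Suc j) = path_code V r p l j @ [rank C (ancestor r p l' (Suc j))]"
    using path_code_cong[of j r p l l' V] below unfolding C_def by auto
  moreover have "prefix (path_code V r p l (Suc j)) (leaf_code V r p l)"
    unfolding leaf_code_def using j by (intro prefix_path_code) simp
  moreover have "prefix (path_code V r p l' (Suc j)) (leaf_code V r p l)"
    unfolding code_eq unfolding leaf_code_def using j by (intro prefix_path_code) simp
  ultimately have "rank C (ancestor r p l (Suc j)) = rank C (ancestor r p l' (Suc j))"
    using prefix_same_cases by fastforce
  then show False
    using inj_on_rank[of C] in_C apart by (auto simp: C_def finite_children[OF tree] dest: inj_onD)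
qed

lemma card_leaves_le:
  assumes "\<forall>v\<in>V. card (children V r p v) \<le> D"
    and "\<forall>l\<in>leaves V r p. card {w \<in> root_path r p l. card (children V r p w) \<ge> 2} \<le> m"
  shows "card (leaves V r p) \<le> (\<Sum>i\<le>m. D ^ i)"
proof -
  have "leaf_code V r p ` leaves V r p \<subseteq> {xs. set xs \<subseteq> {..<D} \<and> length xs \<le> m}"
  proof safe
    fix l assume l: "l \<in> leaves V r p"
    then have "l \<in> V" unfolding leaves_def by simp
    show "length (leaf_code V r p l) \<le> m"
      using length_leaf_code_le[OF \<open>l \<in> V\<close>] assms(2) l by (meson order_trans)
    show "x < D" if "x \<in> set (leaf_code V r p l)" for x
      using set_path_code[OF assms(1) \<open>l \<in> V\<close> order_refl] that
      unfolding leaf_code_def by auto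
  qed
  then have "card (leaf_code V r p ` leaves V r p) \<le> card {xs. set xs \<subseteq> {..<D} \<and> length xs \<le> m}"
    by (intro card_mono finite_lists_length_le) simp_all
  also have "\<dots> = (\<Sum>i\<le>m. D ^ i)"
    by (simp add: card_lists_length_le)
  finally show ?thesis
    by (simp add: card_image[OF inj_on_leaf_code])
qed

end

theorem lemma15:
  shows "\<exists>f :: nat \<Rightarrow> nat \<Rightarrow> nat \<Rightarrow> nat. \<forall>D k b. D \<ge> 1 \<longrightarrow> k \<ge> 1 \<longrightarrow>
     (\<forall>(V :: nat set) r p.
        rooted_tree V r p
        \<and> (\<forall>v\<in>V. tdegree V r p v \<le> D)
        \<and> bT V r p \<le> b
        \<and> (\<forall>l\<in>leaves V r p. card {w \<in> root_path r p l. card (children V r p w) \<ge> 2} < k)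
        \<longrightarrow> card (leaves V r p) \<le> f D b k)"
proof (intro exI[of _ "\<lambda>D b k. \<Sum>i\<le>k - 1. D ^ i"] allI impI, elim conjE)
  fix D k b :: nat and V :: "nat set" and r p
  assume tree: "rooted_tree V r p" and deg: "\<forall>v\<in>V. tdegree V r p v \<le> D"
    and branching: "\<forall>l\<in>leaves V r p. card {w \<in> root_path r p l. card (children V r p w) \<ge> 2} < k"
  have "\<forall>v\<in>V. card (children V r p v) \<le> D"
    using deg unfolding tdegree_def by fastforce
  moreover have "\<forall>l\<in>leaves V r p. card {w \<in> root_path r p l. card (children V r p w) \<ge> 2} \<le> k - 1"
    using branching less_Suc_eq_le by fastforce
  ultimately show "card (leaves V r p) \<le> (\<Sum>i\<le>k - 1. D ^ i)"
    by (rule card_leaves_le[OF tree])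
qed

end
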